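(* Let $p$ be a prime number and let $q_1<q_2<q_3$ be primes such that $q_1q_2q_3$ is coprime to $p(p-1)$. (a) Let $f(x)=x^{q_1q_2}\prod_{i=1}^{q_1}(x+p^i)^{q_1q_3}(x+p^{q_1+1})^{q_2q_3}\in\mathbb{Z}[x]$. Then $R(f)$ is dense in $\mathbb{Q}_p$; and for all but finitely many primes $q$, in particular for every prime $q>p^{q_1+1}$, $R(f)$ is not dense in $\mathbb{Q}_q$. (b) Let $$g_2(x_1,x_2)=x_1^{q_1q_2}\prod_{i=1}^{q_1}(x_1+p^ix_2)^{q_1q_3}(x_1+p^{q_1+1}x_2)^{q_2q_3}\prod_{i=1}^{q_3-1}(p^ix_1+x_2)^{q_1q_2}\prod_{i=q_3}^{q_3+q_2-q_1-1}(p^ix_1+x_2)^{q_1q_3}\prod_{i=q_3+q_2-q_1}^{q_3+q_2-2}(p^ix_1+x_2)^{q_2q_3}.$$ Then $R(g_2)$ is dense in $\mathbb{Q}_p$; and for all but finitely many primes $q$, in particular for every prime $q>p^{q_3+q_2+q_1-1}$, $R(g_2)$ is not dense in $\mathbb{Q}_q$. (c) Let $n>2$ be an integer and $g_n(x_1,\ldots,x_n)=g_2(x_1,x_2)(x_3\cdots x_n)^{q_1q_2q_3}$. Then $R(g_n)$ is dense in $\mathbb{Q}_p$; and for all but finitely many primes $q$, in particular for every prime $q>p^{q_3+q_2+q_1-1}$, $R(g_n)$ is not dense in $\mathbb{Q}_q$.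
   Context: For a polynomial $h\in\mathbb{Z}[x_1,\dots,x_r]$, $R(h)=\{h(\overline{x})/h(\overline{y}) : \overline{x},\overline{y}\in\mathbb{Z}^r,\ h(\overline{y})\neq 0\}$, and density is in the $p$-adic (resp. $q$-adic) topology. *)

theory Defs
  imports "HOL-Computational_Algebra.Computational_Algebra"
begin

text \<open>p-adic valuation of a nonzero rational number (value at 0 is irrelevant below).\<close>
definition padic_val_rat :: "nat \<Rightarrow> rat \<Rightarrow> int" where
  "padic_val_rat p x = (case quotient_of x of (a, b) \<Rightarrow>
      int (multiplicity (int p) a) - int (multiplicity (int p) b))"

text \<open>A set S of rationals is dense in Q_p. Since Q is dense in Q_p, this holds iff
  every rational a is a p-adic limit of elements of S.\<close>
definition padic_dense :: "nat \<Rightarrow> rat set \<Rightarrow> bool" where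
  "padic_dense p S \<longleftrightarrow>
     (\<forall>a::rat. \<forall>k::int. \<exists>r\<in>S. r = a \<or> padic_val_rat p (r - a) \<ge> k)"

definition ratio_set :: "('a \<Rightarrow> int) \<Rightarrow> 'a set \<Rightarrow> rat set" where
  "ratio_set h D = {of_int (h x) / of_int (h y) | x y. x \<in> D \<and> y \<in> D \<and> h y \<noteq> 0}"

text \<open>Z^n as functions nat => int supported on {0..<n}; variable x_i is x (i-1).\<close>
definition int_points :: "nat \<Rightarrow> (nat \<Rightarrow> int) set" where
  "int_points n = {x. \<forall>i\<ge>n. x i = 0}"

definition poly_f :: "nat \<Rightarrow> nat \<Rightarrow> nat \<Rightarrow> nat \<Rightarrow> int \<Rightarrow> int" where
  "poly_f p q1 q2 q3 x =
     x ^ (q1*q2) * (\<Prod>i=1..q1. (x + int p ^ i) ^ (q1*q3)) * (x + int p ^ (q1+1)) ^ (q2*q3)"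

definition poly_g2 :: "nat \<Rightarrow> nat \<Rightarrow> nat \<Rightarrow> nat \<Rightarrow> int \<times> int \<Rightarrow> int" where
  "poly_g2 p q1 q2 q3 = (\<lambda>(x1, x2).
     x1 ^ (q1*q2) * (\<Prod>i=1..q1. (x1 + int p ^ i * x2) ^ (q1*q3))
     * (x1 + int p ^ (q1+1) * x2) ^ (q2*q3)
     * (\<Prod>i=1..q3-1. (int p ^ i * x1 + x2) ^ (q1*q2))
     * (\<Prod>i=q3..q3+q2-q1-1. (int p ^ i * x1 + x2) ^ (q1*q3))
     * (\<Prod>i=q3+q2-q1..q3+q2-2. (int p ^ i * x1 + x2) ^ (q2*q3)))"

definition poly_gn :: "nat \<Rightarrow> nat \<Rightarrow> nat \<Rightarrow> nat \<Rightarrow> nat \<Rightarrow> (nat \<Rightarrow> int) \<Rightarrow> int" where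
  "poly_gn p q1 q2 q3 n x =
     poly_g2 p q1 q2 q3 (x 0, x 1) * (\<Prod>i\<in>{2..<n}. x i) ^ (q1*q2*q3)"

end

theory Submission
  imports Defs "HOL-Number_Theory.Residues"
begin

text \<open>
  Near a root r of h of multiplicity e coprime to p(p - 1), the values
  h(r + p^N w) equal p^(N e + s) times a unit that can be prescribed modulo any p^K, where
  s is the valuation of the cofactor at r: the map x |-> x^e is onto the units modulo p^K.
  A ratio of two such values therefore approximates a given rational as soon as the
  exponents N e + s and M e' + s' at two roots differ by its valuation. For f, and for g2
  on the line x2 = 1, the root 0 has multiplicity q1 q2 and each root -p^j with
  1 <= j <= q1 has multiplicity q1 q3; the cofactor valuation at -p^j is j q2 q3 modulo q1,
  so a suitable j makes every difference attainable.

  The polynomials are products of powers L^(q1 q2),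
  L^(q1 q3), L^(q2 q3) of binary linear forms L whose pairwise determinants are nonzero
  and smaller than q in absolute value. At a primitive point at most one of the forms is
  divisible by q, so every q-adic valuation of a value is divisible by one of q1 q2, q1 q3,
  q2 q3 (g2 is homogeneous of degree 3 q1 q2 q3). No two such numbers are consecutive,
  whereas a ratio q-adically close to q would need valuations v + 1 and v.
\<close>

section \<open>Valuations and congruences modulo prime powers\<close>

lemma multiplicity_prime_power_times:
  fixes p n :: nat and u :: int
  assumes "prime p" "\<not> int p dvd u"
  shows "multiplicity (int p) (int p ^ n * u) = n"
  using assms by (intro multiplicity_decomposeI) auto

lemma multiplicity_prime_power_diff:
  fixes p a b :: nat
  assumes p: "prime p" and ab: "b < a"
  shows "multiplicity (int p) (int p ^ a - int p ^ b) = b"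
proof -
  have "int p ^ a - int p ^ b = int p ^ b * (int p ^ (a - b) - 1)"
    using ab by (simp add: algebra_simps flip: power_add)
  moreover have "\<not> int p dvd int p ^ (a - b) - 1"
    using ab p by (metis dvd_diff_right_iff dvd_power not_prime_unit prime_nat_int_transfer zero_less_diff)
  ultimately show ?thesis
    using multiplicity_prime_power_times[OF p] by simp
qed

lemma padic_val_rat_of_int_div:
  fixes p :: nat and X Y :: int
  assumes p: "prime p" and X: "X \<noteq> 0" and Y: "Y \<noteq> 0"
  shows "padic_val_rat p (of_int X / of_int Y) =
    int (multiplicity (int p) X) - int (multiplicity (int p) Y)"
proof -
  obtain a b where ab: "quotient_of (of_int X / of_int Y) = (a, b)"
    by fastforce
  have b: "b > 0"
    using quotient_of_denom_pos[OF ab] .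
  have "(of_int X / of_int Y :: rat) = of_int a / of_int b"
    using quotient_of_div[OF ab] .
  then have eq: "X * b = a * Y"
    using b Y by (simp add: frac_eq_eq flip: of_int_mult of_int_eq_iff)
  then have "a \<noteq> 0"
    using X b by auto
  moreover have "prime_elem (int p)"
    using p by simp
  ultimately have "multiplicity (int p) X + multiplicity (int p) b =
      multiplicity (int p) a + multiplicity (int p) Y"
    using arg_cong[OF eq, of "multiplicity (int p)"] X Y b
    by (simp add: prime_elem_multiplicity_mult_distrib)
  then show ?thesis
    unfolding padic_val_rat_def ab by simp
qed

lemma rat_eq_prime_power_frac:
  fixes p :: nat and a :: rat
  assumes p: "prime p" and a: "a \<noteq> 0"
  obtains \<alpha> \<beta> :: nat and A B :: int
  where "a = of_int (int p ^ \<alpha> * A) / of_int (int p ^ \<beta> * B)"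
    and "\<not> int p dvd A" and "\<not> int p dvd B"
proof -
  obtain A0 B0 where AB0: "quotient_of a = (A0, B0)"
    by fastforce
  have "B0 \<noteq> 0" "A0 \<noteq> 0"
    using quotient_of_denom_pos[OF AB0] quotient_of_div[OF AB0] a by auto
  moreover have "\<not> is_unit (int p)"
    using prime_gt_1_nat[OF p] by simp
  ultimately obtain A B where
    "A0 = int p ^ multiplicity (int p) A0 * A" "\<not> int p dvd A"
    "B0 = int p ^ multiplicity (int p) B0 * B" "\<not> int p dvd B"
    using multiplicity_decompose' by metis
  then show ?thesis
    using that quotient_of_div[OF AB0] by metis
qed

lemma padic_val_rat_diff_ge:
  fixes p s t \<alpha> \<beta> K :: nat and U V A B :: int
  assumes p: "prime p" and V: "\<not> int p dvd V" and B: "\<not> int p dvd B"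
    and exps: "s + \<beta> = \<alpha> + t" and cong: "[B * U = A * V] (mod int p ^ K)"
  defines "r \<equiv> of_int (int p ^ s * U) / of_int (int p ^ t * V) :: rat"
    and "a \<equiv> of_int (int p ^ \<alpha> * A) / of_int (int p ^ \<beta> * B) :: rat"
  shows "r = a \<or> int \<alpha> - int \<beta> + int K \<le> padic_val_rat p (r - a)"
proof -
  have p0: "int p \<noteq> 0"
    using p by simp
  have V0: "V \<noteq> 0" and B0: "B \<noteq> 0"
    using V B by auto
  obtain z where z: "B * U - A * V = int p ^ K * z"
    using cong unfolding cong_iff_dvd_diff by (auto elim: dvdE)
  define Z where "Z = int p ^ s * U * (int p ^ \<beta> * B) - int p ^ \<alpha> * A * (int p ^ t * V)"
  have Z: "Z = int p ^ (s + \<beta> + K) * z"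
  proof -
    have "Z = int p ^ (s + \<beta>) * (B * U) - int p ^ (\<alpha> + t) * (A * V)"
      unfolding Z_def by (simp add: power_add mult_ac)
    then have "Z = int p ^ (s + \<beta>) * (B * U - A * V)"
      unfolding exps by (simp add: right_diff_distrib)
    then show ?thesis
      unfolding z by (simp add: power_add mult.assoc)
  qed
  have diff: "r - a = of_int Z / of_int (int p ^ t * V * (int p ^ \<beta> * B))"
    unfolding r_def a_def Z_def using p0 V0 B0 by (simp add: diff_frac_eq)
  show ?thesis
  proof (cases "z = 0")
    case True
    then show ?thesis
      using diff Z by simp
  next
    case False
    have Z0: "Z \<noteq> 0" and D0: "int p ^ t * V * (int p ^ \<beta> * B) \<noteq> 0"
      using Z False p0 V0 B0 by simp_all
    have "multiplicity (int p) (int p ^ t * V * (int p ^ \<beta> * B)) = t + \<beta>"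
      using multiplicity_prime_power_times[OF p, of "V * B" "t + \<beta>"] p V B
      by (simp add: power_add mult_ac prime_dvd_mult_iff)
    moreover have "s + \<beta> + K \<le> multiplicity (int p) Z"
      unfolding Z using p0 False p
      by (simp add: prime_elem_multiplicity_mult_distrib prime_elem_multiplicity_power_distrib)
    ultimately show ?thesis
      unfolding diff padic_val_rat_of_int_div[OF p Z0 D0] using exps by linarith
  qed
qed

lemma not_dvd_if_cong_prime_power:
  fixes p K :: nat and U c :: int
  assumes "[U = c] (mod int p ^ K)" "0 < K" "\<not> int p dvd c"
  shows "\<not> int p dvd U"
proof -
  have "[U = c] (mod int p)"
    using assms(1,2) by (elim cong_dvd_modulus) simp
  then show ?thesis
    using assms(3) cong_dvd_iff by blast
qed

lemma prime_power_cong_inverse: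
  fixes p K :: nat and C :: int
  assumes p: "prime p" and K: "0 < K" and C: "\<not> int p dvd C"
  obtains C' where "[C * C' = 1] (mod int p ^ K)" "\<not> int p dvd C'"
proof -
  have "coprime C (int p ^ K)"
    using p C by (intro prime_imp_power_coprime) simp_all
  then obtain C' where C': "[C * C' = 1] (mod int p ^ K)"
    using cong_solve_coprime_int by blast
  have "\<not> int p dvd C * C'"
    using not_dvd_if_cong_prime_power[OF C' K] prime_gt_1_nat[OF p] by simp
  then have "\<not> int p dvd C'"
    by (meson dvd_mult)
  with C' show ?thesis
    by (rule that)
qed

lemma exists_power_root_cong:
  fixes p e K :: nat and c :: int
  assumes p: "prime p" and e: "coprime e (p * (p - 1))" and c: "\<not> int p dvd c"
  shows "\<exists>w. [w ^ e = c] (mod int p ^ K)"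
proof (cases "K = 0")
  case False
  define \<phi> where "\<phi> = totient (p ^ K)"
  have "\<phi> = p ^ (K - 1) * (p - 1)"
    using totient_prime_power[OF p] False by (simp add: \<phi>_def)
  then have "coprime e \<phi>"
    using e by simp
  moreover have "e \<noteq> 0"
    using e p by (metis coprime_0_left_iff coprime_mult_right_iff not_prime_unit)
  ultimately obtain x j where x: "e * x = \<phi> * j + 1"
    using bezout_nat[of e \<phi>] by auto
  have "[c ^ \<phi> = 1] (mod int p ^ K)"
  proof -
    interpret residues "int p ^ K" "residue_ring (int p ^ K)"
      using False prime_gt_1_nat[OF p] by unfold_locales simp
    have "coprime c (int p ^ K)"
      using p c by (intro prime_imp_power_coprime) simp_all
    then show ?thesis
      using euler_theorem by (simp add: \<phi>_def nat_power_eq)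
  qed
  then have "[(c ^ \<phi>) ^ j * c = 1 ^ j * c] (mod int p ^ K)"
    by (intro cong_mult cong_pow) auto
  then have "[(c ^ x) ^ e = c] (mod int p ^ K)"
    by (simp add: x mult.commute[of x] power_add flip: power_mult) (simp add: mult.commute)
  then show ?thesis by blast
qed simp

section \<open>A density criterion\<close>

definition preserves_cong :: "(int \<Rightarrow> int) \<Rightarrow> bool" where
  "preserves_cong G \<longleftrightarrow> (\<forall>a b m. [a = b] (mod m) \<longrightarrow> [G a = G b] (mod m))"

lemma preserves_congD: "preserves_cong G \<Longrightarrow> [a = b] (mod m) \<Longrightarrow> [G a = G b] (mod m)"
  unfolding preserves_cong_def by blast

lemma preserves_cong_const: "preserves_cong (\<lambda>x. c)"
  unfolding preserves_cong_def by simp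

lemma preserves_cong_id: "preserves_cong (\<lambda>x. x)"
  unfolding preserves_cong_def by simp

lemma preserves_cong_add:
  "preserves_cong f \<Longrightarrow> preserves_cong g \<Longrightarrow> preserves_cong (\<lambda>x. f x + g x)"
  unfolding preserves_cong_def by (blast intro: cong_add)

lemma preserves_cong_mult:
  "preserves_cong f \<Longrightarrow> preserves_cong g \<Longrightarrow> preserves_cong (\<lambda>x. f x * g x)"
  unfolding preserves_cong_def by (blast intro: cong_mult)

lemma preserves_cong_power: "preserves_cong f \<Longrightarrow> preserves_cong (\<lambda>x. f x ^ n)"
  unfolding preserves_cong_def by (blast intro: cong_pow)

lemma preserves_cong_prod:
  "(\<And>i. i \<in> A \<Longrightarrow> preserves_cong (f i)) \<Longrightarrow> preserves_cong (\<lambda>x. \<Prod>i\<in>A. f i x)"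
  unfolding preserves_cong_def by (blast intro: cong_prod)

lemmas preserves_cong_intros = preserves_cong_const preserves_cong_id preserves_cong_add
  preserves_cong_mult preserves_cong_power preserves_cong_prod

lemma preserves_cong_not_dvd:
  assumes "preserves_cong Q" "\<not> int p dvd Q 0" "int p dvd r"
  shows "\<not> int p dvd Q r"
proof -
  have "[Q r = Q 0] (mod int p)"
    using assms(3) by (intro preserves_congD[OF assms(1)]) (simp add: cong_0_iff)
  then show ?thesis
    using assms(2) cong_dvd_iff by blast
qed

definition unit_valuations :: "nat \<Rightarrow> ('a \<Rightarrow> int) \<Rightarrow> nat \<Rightarrow> nat set" where
  "unit_valuations p h K =
     {n. \<forall>c. \<not> int p dvd c \<longrightarrow> (\<exists>x U. h x = int p ^ n * U \<and> [U = c] (mod int p ^ K))}"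

lemma unit_valuationsE:
  assumes "n \<in> unit_valuations p h K" "0 < K" "\<not> int p dvd c"
  obtains x U where "h x = int p ^ n * U" "[U = c] (mod int p ^ K)" "\<not> int p dvd U"
  using assms not_dvd_if_cong_prime_power unfolding unit_valuations_def by blast

lemma value_near_root:
  fixes p e s N :: nat and r w C :: int and G h :: "int \<Rightarrow> int"
  assumes G: "preserves_cong G" "G r = int p ^ s * C" and h: "\<And>x. h x = (x - r) ^ e * G x"
    and N: "s \<le> N"
  obtains z where "h (r + int p ^ N * w) = int p ^ (N * e + s) * (w ^ e * (C + int p ^ (N - s) * z))"
proof -
  have "[G r = G (r + int p ^ N * w)] (mod int p ^ N)"
    by (intro preserves_congD[OF G(1)]) (simp add: cong_iff_dvd_diff)
  then obtain z where "G (r + int p ^ N * w) = G r + int p ^ N * z"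
    unfolding cong_iff_lin by blast
  also have "\<dots> = int p ^ s * (C + int p ^ (N - s) * z)"
  proof -
    have "int p ^ N = int p ^ s * int p ^ (N - s)"
      using N by (simp flip: power_add)
    then show ?thesis
      unfolding G(2) by (simp add: distrib_left mult.assoc)
  qed
  finally have "h (r + int p ^ N * w) = (int p ^ N * w) ^ e * (int p ^ s * (C + int p ^ (N - s) * z))"
    unfolding h by simp
  then have "h (r + int p ^ N * w) = int p ^ (N * e + s) * (w ^ e * (C + int p ^ (N - s) * z))"
    by (simp add: power_add power_mult power_mult_distrib mult_ac)
  then show ?thesis
    by (rule that)
qed

lemma root_valuation_in_unit_valuations:
  fixes p e K N :: nat and r :: int and G h :: "int \<Rightarrow> int"
  assumes p: "prime p" and K: "0 < K" and e: "coprime e (p * (p - 1))"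
    and G: "preserves_cong G" "G r \<noteq> 0" and h: "\<And>x. h x = (x - r) ^ e * G x"
    and N: "multiplicity (int p) (G r) + K \<le> N"
  shows "N * e + multiplicity (int p) (G r) \<in> unit_valuations p h K"
  unfolding unit_valuations_def
proof (intro CollectI allI impI)
  fix c :: int
  assume c: "\<not> int p dvd c"
  define s where "s = multiplicity (int p) (G r)"
  have "\<not> is_unit (int p)"
    using prime_gt_1_nat[OF p] by simp
  then obtain C where GC: "G r = int p ^ s * C" and C: "\<not> int p dvd C"
    using multiplicity_decompose'[OF G(2)] unfolding s_def by blast
  obtain C' where C': "[C * C' = 1] (mod int p ^ K)" "\<not> int p dvd C'"
    using prime_power_cong_inverse[OF p K C] .
  have "\<not> int p dvd c * C'"
    using p c C'(2) by (simp add: prime_dvd_mult_iff)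
  then obtain w where w: "[w ^ e = c * C'] (mod int p ^ K)"
    using exists_power_root_cong[OF p e] by blast
  have "s \<le> N"
    using N unfolding s_def by simp
  then obtain z where hx: "h (r + int p ^ N * w) = int p ^ (N * e + s) * (w ^ e * (C + int p ^ (N - s) * z))"
    by (rule value_near_root[OF G(1) GC h])
  have "int p ^ K dvd int p ^ (N - s)"
    using N unfolding s_def by (intro le_imp_power_dvd) simp
  then have "[C + int p ^ (N - s) * z = C] (mod int p ^ K)"
    by (simp add: cong_iff_dvd_diff)
  then have "[w ^ e * (C + int p ^ (N - s) * z) = (c * C') * C] (mod int p ^ K)"
    using w by (intro cong_mult)
  also have "[(c * C') * C = c * 1] (mod int p ^ K)"
    using C'(1) by (metis cong_scalar_left mult.assoc mult.commute)
  finally show "\<exists>x U. h x = int p ^ (N * e + s) * U \<and> [U = c] (mod int p ^ K)"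
    using hx by auto
qed

lemma ratio_set_approx_zero:
  fixes p :: nat and h :: "'a \<Rightarrow> int"
  assumes p: "prime p"
    and H: "\<And>d. \<exists>s\<in>unit_valuations p h 1. \<exists>t\<in>unit_valuations p h 1. d = int s - int t"
  shows "\<exists>r\<in>ratio_set h UNIV. k \<le> padic_val_rat p r"
proof -
  have p0: "int p \<noteq> 0" and p1: "\<not> int p dvd 1"
    using prime_gt_1_nat[OF p] by auto
  obtain s t where st: "s \<in> unit_valuations p h 1" "t \<in> unit_valuations p h 1" "k = int s - int t"
    using H[of k] by auto
  obtain x U where x: "h x = int p ^ s * U" "\<not> int p dvd U"
    using unit_valuationsE[OF st(1) _ p1] by (metis zero_less_one)
  obtain y V where y: "h y = int p ^ t * V" "\<not> int p dvd V"
    using unit_valuationsE[OF st(2) _ p1] by (metis zero_less_one)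
  have "h x \<noteq> 0" "h y \<noteq> 0"
    using x y p0 by auto
  then have "padic_val_rat p (of_int (h x) / of_int (h y)) =
      int (multiplicity (int p) (h x)) - int (multiplicity (int p) (h y))"
    by (rule padic_val_rat_of_int_div[OF p])
  also have "\<dots> = k"
    unfolding x y multiplicity_prime_power_times[OF p x(2)]
      multiplicity_prime_power_times[OF p y(2)] st(3) ..
  finally have "padic_val_rat p (of_int (h x) / of_int (h y)) = k" .
  moreover have "of_int (h x) / of_int (h y) \<in> ratio_set h UNIV"
    unfolding ratio_set_def using \<open>h y \<noteq> 0\<close> by blast
  ultimately show ?thesis
    by auto
qed

lemma ratio_set_approx_nonzero:
  fixes p :: nat and h :: "'a \<Rightarrow> int" and a :: rat
  assumes p: "prime p" and a0: "a \<noteq> 0"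
    and H: "\<And>K d. 0 < K \<Longrightarrow> \<exists>s\<in>unit_valuations p h K. \<exists>t\<in>unit_valuations p h K. d = int s - int t"
  shows "\<exists>r\<in>ratio_set h UNIV. r = a \<or> k \<le> padic_val_rat p (r - a)"
proof -
  have p0: "int p \<noteq> 0" and p1: "\<not> int p dvd 1"
    using prime_gt_1_nat[OF p] by auto
  obtain \<alpha> \<beta> A B where a: "a = of_int (int p ^ \<alpha> * A) / of_int (int p ^ \<beta> * B)"
    and A: "\<not> int p dvd A" and B: "\<not> int p dvd B"
    using rat_eq_prime_power_frac[OF p a0] by metis
  define K where "K = nat (k - (int \<alpha> - int \<beta>)) + 1"
  have K: "0 < K"
    unfolding K_def by simp
  obtain s t where st: "s \<in> unit_valuations p h K" "t \<in> unit_valuations p h K"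
    "int \<alpha> - int \<beta> = int s - int t"
    using H[OF K] by metis
  obtain y V where y: "h y = int p ^ t * V" "[V = 1] (mod int p ^ K)" "\<not> int p dvd V"
    using unit_valuationsE[OF st(2) K p1] by metis
  obtain B' where B': "[B * B' = 1] (mod int p ^ K)" "\<not> int p dvd B'"
    using prime_power_cong_inverse[OF p K B] .
  have "\<not> int p dvd A * B'"
    using p A B'(2) by (simp add: prime_dvd_mult_iff)
  then obtain x U where x: "h x = int p ^ s * U" "[U = A * B'] (mod int p ^ K)"
    using unit_valuationsE[OF st(1) K] by metis
  have "[B * U = B * (A * B')] (mod int p ^ K)"
    using x(2) by (rule cong_scalar_left)
  also have "[B * (A * B') = A * 1] (mod int p ^ K)"
    using B'(1) by (metis cong_scalar_left mult.left_commute)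
  also have "[A * 1 = A * V] (mod int p ^ K)"
    using y(2) by (intro cong_scalar_left) (rule cong_sym)
  finally have "[B * U = A * V] (mod int p ^ K)" .
  moreover have "s + \<beta> = \<alpha> + t"
    using st(3) by linarith
  ultimately have "of_int (h x) / of_int (h y) = a \<or>
      int \<alpha> - int \<beta> + int K \<le> padic_val_rat p (of_int (h x) / of_int (h y) - a)"
    unfolding x(1) y(1) a using padic_val_rat_diff_ge[OF p y(3) B] by blast
  moreover have "of_int (h x) / of_int (h y) \<in> ratio_set h UNIV"
    unfolding ratio_set_def using y(1,3) p0 by fastforce
  moreover have "k \<le> int \<alpha> - int \<beta> + int K"
    unfolding K_def by simp
  ultimately show ?thesis
    by (metis order_trans)
qed

lemma padic_dense_ratio_setI:
  fixes p :: nat and h :: "'a \<Rightarrow> int"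
  assumes p: "prime p"
    and H: "\<And>K d. 0 < K \<Longrightarrow> \<exists>s\<in>unit_valuations p h K. \<exists>t\<in>unit_valuations p h K. d = int s - int t"
  shows "padic_dense p (ratio_set h UNIV)"
  unfolding padic_dense_def
proof (intro allI)
  fix a :: rat and k :: int
  show "\<exists>r\<in>ratio_set h UNIV. r = a \<or> k \<le> padic_val_rat p (r - a)"
  proof (cases "a = 0")
    case True
    then show ?thesis
      using ratio_set_approx_zero[OF p, of h k] H[of 1] by auto
  next
    case False
    then show ?thesis
      using ratio_set_approx_nonzero[OF p _ H] by blast
  qed
qed

lemma padic_dense_mono: "padic_dense p S \<Longrightarrow> S \<subseteq> T \<Longrightarrow> padic_dense p T"
  unfolding padic_dense_def by blast

lemma ratio_set_subset:
  assumes "\<And>x. x \<in> D \<Longrightarrow> \<exists>y\<in>E. h y = g x"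
  shows "ratio_set g D \<subseteq> ratio_set h E"
proof
  fix r
  assume "r \<in> ratio_set g D"
  then obtain x y where r: "r = of_int (g x) / of_int (g y)" and xy: "x \<in> D" "y \<in> D" "g y \<noteq> 0"
    unfolding ratio_set_def by blast
  obtain x' y' where "x' \<in> E" "h x' = g x" "y' \<in> E" "h y' = g y"
    using assms xy(1,2) by metis
  then show "r \<in> ratio_set h E"
    unfolding ratio_set_def r using xy(3) by (intro CollectI exI[of _ x'] exI[of _ y']) simp
qed

section \<open>Density in the p-adic numbers\<close>

lemma exists_large_diff_representation:
  fixes a b L :: nat and z :: int
  assumes ab: "coprime a b" and a: "0 < a" and b: "0 < b"
  shows "\<exists>N M. L \<le> N \<and> L \<le> M \<and> z = int a * int N - int b * int M"
proof -
  obtain u v where uv: "u * int a + v * int b = 1"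
    using bezout_int[of "int a" "int b"] ab by auto
  define T where "T = \<bar>z * u\<bar> + \<bar>z * v\<bar> + int L"
  have "0 \<le> T"
    unfolding T_def by simp
  then have "T \<le> int b * T" "T \<le> int a * T"
    using a b by (simp_all add: mult_le_cancel_right1)
  then have "int L \<le> z * u + int b * T" "int L \<le> - (z * v) + int a * T"
    unfolding T_def by linarith+
  moreover have "z = int a * (z * u + int b * T) - int b * (- (z * v) + int a * T)"
    using arg_cong[OF uv, of "\<lambda>t. z * t"] by (simp add: algebra_simps)
  ultimately show ?thesis
    by (intro exI[of _ "nat (z * u + int b * T)"] exI[of _ "nat (- (z * v) + int a * T)"]) auto
qed

lemma exists_residue_shift:
  fixes m c :: nat and d :: int
  assumes m: "0 < m" and c: "coprime c m"
  shows "\<exists>j\<in>{1..m}. int m dvd d + int c * (int j - 1)"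
proof -
  obtain c' where c': "[int c * c' = 1] (mod int m)"
    using c cong_solve_coprime_int[of "int c" "int m"] by auto
  define j0 where "j0 = (- d * c') mod int m"
  have j0: "0 \<le> j0" "j0 < int m"
    unfolding j0_def using m by simp_all
  have "[d + int c * j0 = d + (int c * c') * (- d)] (mod int m)"
    unfolding j0_def by (intro cong_add cong_refl) (simp add: cong_def mod_mult_right_eq mult_ac)
  also have "[d + (int c * c') * (- d) = d + 1 * (- d)] (mod int m)"
    using c' by (intro cong_add cong_mult cong_refl)
  finally have "int m dvd d + int c * j0"
    by (simp add: cong_0_iff)
  moreover have "nat j0 + 1 \<in> {1..m}" "int (nat j0 + 1) - 1 = j0"
    using j0 by auto
  ultimately show ?thesis
    by metis
qed

lemma poly_f_eq:
  "poly_f p q1 q2 q3 x =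
     x ^ (q1 * q2) * (\<Prod>i=1..q1. x + int p ^ i) ^ (q1 * q3) * (x + int p ^ (q1 + 1)) ^ (q2 * q3)"
  unfolding poly_f_def prod_power_distrib ..

lemma poly_f_root_zero:
  fixes p q1 q2 q3 :: nat and Q :: "int \<Rightarrow> int"
  assumes p: "prime p" and Q: "preserves_cong Q" "\<not> int p dvd Q 0"
  obtains G where "preserves_cong G" "G 0 \<noteq> 0"
    and "\<And>x. poly_f p q1 q2 q3 x * Q x = (x - 0) ^ (q1 * q2) * G x"
    and "\<exists>m. multiplicity (int p) (G 0) = q2 * q3 + q1 * m"
proof -
  define P where "P = (\<lambda>x. \<Prod>i=1..q1. x + int p ^ i)"
  define G where "G = (\<lambda>x. P x ^ (q1 * q3) * (x + int p ^ (q1 + 1)) ^ (q2 * q3) * Q x)"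
  have pp: "prime_elem (int p)"
    using p by simp
  have P0: "P 0 = int p ^ (\<Sum>i=1..q1. i)"
    unfolding P_def by (simp add: power_sum)
  have Q0: "Q 0 \<noteq> 0"
    using Q(2) by auto
  have "G 0 \<noteq> 0"
    unfolding G_def P0 using p Q0 by simp
  moreover have "multiplicity (int p) (G 0) = q2 * q3 + q1 * (q3 * (\<Sum>i=1..q1. i) + q2 * q3)"
    unfolding G_def P0 using p Q0 not_dvd_imp_multiplicity_0[OF Q(2)]
    by (simp add: prime_elem_multiplicity_mult_distrib[OF pp] prime_elem_multiplicity_power_distrib[OF pp]
        flip: power_mult) (simp add: algebra_simps)
  moreover have "preserves_cong G"
    unfolding G_def P_def by (intro preserves_cong_intros Q(1))
  ultimately show ?thesis
    using that[of G] unfolding G_def P_def poly_f_eq by (simp add: mult.assoc)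
qed

lemma poly_f_root_minus_prime_power:
  fixes p q1 q2 q3 j :: nat and Q :: "int \<Rightarrow> int"
  assumes p: "prime p" and Q: "preserves_cong Q" "\<not> int p dvd Q 0" and j: "j \<in> {1..q1}"
  obtains G where "preserves_cong G" "G (- (int p ^ j)) \<noteq> 0"
    and "\<And>x. poly_f p q1 q2 q3 x * Q x = (x - (- (int p ^ j))) ^ (q1 * q3) * G x"
    and "\<exists>m. multiplicity (int p) (G (- (int p ^ j))) = j * (q2 * q3) + q1 * m"
proof -
  define r where "r = - (int p ^ j)"
  define P where "P = (\<lambda>x. \<Prod>i\<in>{1..q1} - {j}. x + int p ^ i)"
  define G where "G = (\<lambda>x. x ^ (q1 * q2) * P x ^ (q1 * q3) * (x + int p ^ (q1 + 1)) ^ (q2 * q3) * Q x)"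
  have pp: "prime_elem (int p)" and p1: "1 < int p"
    using p prime_gt_1_nat[OF p] by simp_all
  have factor: "(\<Prod>i=1..q1. x + int p ^ i) = (x - r) * P x" for x
    unfolding P_def r_def using j by (simp add: prod.remove)
  have "int p ^ (q1 + 1) \<noteq> int p ^ j"
    using p1 j by (subst power_inject_exp) auto
  then have r0: "r \<noteq> 0" and C0: "r + int p ^ (q1 + 1) \<noteq> 0" and P0: "P r \<noteq> 0"
    unfolding P_def r_def using p1 by (auto simp: power_inject_exp)
  have Qr: "\<not> int p dvd Q r"
    using preserves_cong_not_dvd[OF Q] j unfolding r_def by simp
  then have Q0: "Q r \<noteq> 0"
    by auto
  have "multiplicity (int p) r = j"
    unfolding r_def using multiplicity_prime_power_times[OF p, of "-1" j] p by simp
  moreover have "multiplicity (int p) (r + int p ^ (q1 + 1)) = j"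
    unfolding r_def using j multiplicity_prime_power_diff[OF p, of j "q1 + 1"] by simp
  moreover have "multiplicity (int p) (G r) =
      q1 * q2 * multiplicity (int p) r + q1 * q3 * multiplicity (int p) (P r)
      + q2 * q3 * multiplicity (int p) (r + int p ^ (q1 + 1)) + multiplicity (int p) (Q r)"
    unfolding G_def using r0 C0 P0 Q0
    by (simp add: prime_elem_multiplicity_mult_distrib[OF pp] prime_elem_multiplicity_power_distrib[OF pp])
  ultimately have "multiplicity (int p) (G r) = j * (q2 * q3) + q1 * (q2 * j + q3 * multiplicity (int p) (P r))"
    using not_dvd_imp_multiplicity_0[OF Qr] by (simp add: algebra_simps)
  moreover have "G r \<noteq> 0"
    unfolding G_def using r0 C0 P0 Q0 by simp
  moreover have "preserves_cong G"
    unfolding G_def P_def by (intro preserves_cong_intros Q(1))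
  ultimately show ?thesis
    using that[of G] unfolding G_def r_def poly_f_eq factor
    by (simp add: power_mult_distrib mult_ac)
qed

lemma unit_valuations_diff_two_roots:
  fixes p K c a b :: nat and d r0 r1 :: int and h G0 G1 :: "int \<Rightarrow> int"
  assumes p: "prime p" and K: "0 < K" and ab: "coprime a b" "0 < a" "0 < b"
    and e: "coprime (c * a) (p * (p - 1))" "coprime (c * b) (p * (p - 1))"
    and G0: "preserves_cong G0" "G0 r0 \<noteq> 0" "\<And>x. h x = (x - r0) ^ (c * a) * G0 x"
    and G1: "preserves_cong G1" "G1 r1 \<noteq> 0" "\<And>x. h x = (x - r1) ^ (c * b) * G1 x"
    and d: "int c dvd d - int (multiplicity (int p) (G0 r0)) + int (multiplicity (int p) (G1 r1))"
  shows "\<exists>s\<in>unit_valuations p h K. \<exists>t\<in>unit_valuations p h K. d = int s - int t"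
proof -
  define s0 where "s0 = multiplicity (int p) (G0 r0)"
  define s1 where "s1 = multiplicity (int p) (G1 r1)"
  obtain z where z: "d - int s0 + int s1 = int c * z"
    using d unfolding s0_def s1_def by (auto elim: dvdE)
  obtain N M where NM: "s0 + s1 + K \<le> N" "s0 + s1 + K \<le> M" and za: "z = int a * int N - int b * int M"
    using exists_large_diff_representation[OF ab] by blast
  have "d = int (N * (c * a) + s0) - int (M * (c * b) + s1)"
    using z unfolding za by (simp add: algebra_simps)
  moreover have "N * (c * a) + s0 \<in> unit_valuations p h K" "M * (c * b) + s1 \<in> unit_valuations p h K"
    using root_valuation_in_unit_valuations[OF p K e(1) G0] root_valuation_in_unit_valuations[OF p K e(2) G1] NM
    unfolding s0_def s1_def by simp_all
  ultimately show ?thesis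
    by blast
qed

lemma padic_dense_ratio_set_poly_f_mult:
  fixes p q1 q2 q3 :: nat and Q :: "int \<Rightarrow> int"
  assumes p: "prime p" and q: "prime q1" "prime q2" "prime q3" "q1 < q2" "q2 < q3"
    and cop: "coprime (q1 * q2 * q3) (p * (p - 1))"
    and Q: "preserves_cong Q" "\<not> int p dvd Q 0"
  shows "padic_dense p (ratio_set (\<lambda>x. poly_f p q1 q2 q3 x * Q x) UNIV)"
proof (rule padic_dense_ratio_setI[OF p])
  fix K :: nat and d :: int
  assume K: "0 < K"
  let ?h = "\<lambda>x. poly_f p q1 q2 q3 x * Q x"
  have q0: "0 < q1" "0 < q2" "0 < q3"
    using q by (simp_all add: prime_gt_0_nat)
  have "coprime q2 q3" "coprime (q2 * q3) q1"
    using q by (simp_all add: primes_coprime)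
  obtain j where j: "j \<in> {1..q1}" and "int q1 dvd d + int (q2 * q3) * (int j - 1)"
    using exists_residue_shift[OF q0(1) \<open>coprime (q2 * q3) q1\<close>] by blast
  then obtain k where k: "d + int (q2 * q3) * (int j - 1) = int q1 * k"
    by (auto elim: dvdE)
  obtain G0 where G0: "preserves_cong G0" "G0 0 \<noteq> 0" "\<And>x. ?h x = (x - 0) ^ (q1 * q2) * G0 x"
    and m0: "\<exists>m. multiplicity (int p) (G0 0) = q2 * q3 + q1 * m"
    using poly_f_root_zero[OF p Q] by metis
  obtain G1 where G1: "preserves_cong G1" "G1 (- (int p ^ j)) \<noteq> 0"
    "\<And>x. ?h x = (x - (- (int p ^ j))) ^ (q1 * q3) * G1 x"
    and m1: "\<exists>m. multiplicity (int p) (G1 (- (int p ^ j))) = j * (q2 * q3) + q1 * m"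
    using poly_f_root_minus_prime_power[OF p Q j] by metis
  have "int q1 dvd d - int (multiplicity (int p) (G0 0)) + int (multiplicity (int p) (G1 (- (int p ^ j))))"
  proof -
    obtain m0' m1' where "multiplicity (int p) (G0 0) = q2 * q3 + q1 * m0'"
      "multiplicity (int p) (G1 (- (int p ^ j))) = j * (q2 * q3) + q1 * m1'"
      using m0 m1 by blast
    then have "d - int (multiplicity (int p) (G0 0)) + int (multiplicity (int p) (G1 (- (int p ^ j))))
        = int q1 * (k - int m0' + int m1')"
      using k by (simp add: algebra_simps)
    then show ?thesis
      by simp
  qed
  moreover have "coprime (q1 * q2) (p * (p - 1))" "coprime (q1 * q3) (p * (p - 1))"
    using cop by simp_all
  ultimately show "\<exists>s\<in>unit_valuations p ?h K. \<exists>t\<in>unit_valuations p ?h K. d = int s - int t"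
    using unit_valuations_diff_two_roots[OF p K \<open>coprime q2 q3\<close> q0(2,3) _ _ G0 G1] by blast
qed

lemma padic_dense_ratio_set_poly_f:
  fixes p q1 q2 q3 :: nat
  assumes "prime p" "prime q1" "prime q2" "prime q3" "q1 < q2" "q2 < q3"
    and "coprime (q1 * q2 * q3) (p * (p - 1))"
  shows "padic_dense p (ratio_set (poly_f p q1 q2 q3) UNIV)"
  using padic_dense_ratio_set_poly_f_mult[OF assms, of "\<lambda>_. 1"] prime_gt_1_nat[OF assms(1)]
  by (simp add: preserves_cong_const)

lemma padic_dense_ratio_set_poly_g2_line:
  fixes p q1 q2 q3 :: nat
  assumes p: "prime p" and q: "prime q1" "prime q2" "prime q3" "q1 < q2" "q2 < q3"
    and cop: "coprime (q1 * q2 * q3) (p * (p - 1))"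
  shows "padic_dense p (ratio_set (\<lambda>x. poly_g2 p q1 q2 q3 (x, 1)) UNIV)"
proof -
  define Q where "Q = (\<lambda>x. (\<Prod>i=1..q3-1. (int p ^ i * x + 1) ^ (q1 * q2))
     * (\<Prod>i=q3..q3+q2-q1-1. (int p ^ i * x + 1) ^ (q1 * q3))
     * (\<Prod>i=q3+q2-q1..q3+q2-2. (int p ^ i * x + 1) ^ (q2 * q3)))"
  have "preserves_cong Q"
    unfolding Q_def by (intro preserves_cong_intros)
  moreover have "\<not> int p dvd Q 0"
    using prime_gt_1_nat[OF p] by (simp add: Q_def)
  ultimately have "padic_dense p (ratio_set (\<lambda>x. poly_f p q1 q2 q3 x * Q x) UNIV)"
    by (rule padic_dense_ratio_set_poly_f_mult[OF p q cop])
  moreover have "poly_f p q1 q2 q3 x * Q x = poly_g2 p q1 q2 q3 (x, 1)" for x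
    unfolding poly_f_def poly_g2_def Q_def by (simp only: mult_1_right mult.assoc case_prod_conv)
  ultimately show ?thesis
    by simp
qed

lemma padic_dense_ratio_set_poly_g2:
  fixes p q1 q2 q3 :: nat
  assumes "prime p" "prime q1" "prime q2" "prime q3" "q1 < q2" "q2 < q3"
    and "coprime (q1 * q2 * q3) (p * (p - 1))"
  shows "padic_dense p (ratio_set (poly_g2 p q1 q2 q3) UNIV)"
  by (rule padic_dense_mono[OF padic_dense_ratio_set_poly_g2_line[OF assms] ratio_set_subset]) blast

lemma padic_dense_ratio_set_poly_gn:
  fixes p q1 q2 q3 n :: nat
  assumes "prime p" "prime q1" "prime q2" "prime q3" "q1 < q2" "q2 < q3"
    and "coprime (q1 * q2 * q3) (p * (p - 1))" and n: "2 < n"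
  shows "padic_dense p (ratio_set (poly_gn p q1 q2 q3 n) (int_points n))"
proof (rule padic_dense_mono[OF padic_dense_ratio_set_poly_g2_line[OF assms(1-7)] ratio_set_subset])
  fix x :: int
  let ?y = "\<lambda>i. if i = 0 then x else if i < n then 1 else 0"
  have "?y \<in> int_points n" "(\<Prod>i\<in>{2..<n}. ?y i) = 1"
    unfolding int_points_def using n by auto
  then show "\<exists>y\<in>int_points n. poly_gn p q1 q2 q3 n y = poly_g2 p q1 q2 q3 (x, 1)"
    using n unfolding poly_gn_def by (intro bexI[of _ ?y]) auto
qed

section \<open>A non-density criterion\<close>

lemma multiplicity_eq_Suc_if_dvd_diff:
  fixes q :: nat and X Y :: int
  assumes q: "prime q" and Y: "Y \<noteq> 0"
    and dvd: "int q ^ (multiplicity (int q) Y + 2) dvd X - int q * Y"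
  shows "X \<noteq> 0 \<and> multiplicity (int q) X = Suc (multiplicity (int q) Y)"
proof -
  define m where "m = multiplicity (int q) Y"
  have "\<not> is_unit (int q)"
    using prime_gt_1_nat[OF q] by simp
  then obtain Y' where Y': "Y = int q ^ m * Y'" "\<not> int q dvd Y'"
    using multiplicity_decompose'[OF Y] unfolding m_def by blast
  obtain z where "X - int q * Y = int q ^ (m + 2) * z"
    using dvd unfolding m_def by (auto elim: dvdE)
  then have X: "X = int q ^ Suc m * (Y' + int q * z)"
    unfolding Y'(1) by (simp add: algebra_simps)
  have "\<not> int q dvd Y' + int q * z"
    using Y'(2) by (simp add: dvd_add_left_iff)
  then have "multiplicity (int q) X = Suc m"
    unfolding X by (rule multiplicity_prime_power_times[OF q])
  moreover have "X \<noteq> 0"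
    unfolding X using q \<open>\<not> int q dvd Y' + int q * z\<close> by auto
  ultimately show ?thesis
    unfolding m_def by simp
qed

lemma not_padic_dense_ratio_setI:
  fixes q :: nat and h :: "'a \<Rightarrow> int"
  assumes q: "prime q"
    and gap: "\<And>x y. x \<in> D \<Longrightarrow> y \<in> D \<Longrightarrow> h x \<noteq> 0 \<Longrightarrow> h y \<noteq> 0 \<Longrightarrow>
      multiplicity (int q) (h x) \<noteq> Suc (multiplicity (int q) (h y))"
  shows "\<not> padic_dense q (ratio_set h D)"
proof
  assume "padic_dense q (ratio_set h D)"
  then obtain r where "r \<in> ratio_set h D" and r: "r = of_int (int q) \<or> 2 \<le> padic_val_rat q (r - of_int (int q))"
    unfolding padic_dense_def by blast
  then obtain x y where xy: "x \<in> D" "y \<in> D" "h y \<noteq> 0" and r_eq: "r = of_int (h x) / of_int (h y)"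
    unfolding ratio_set_def by blast
  define X where "X = h x"
  define Y where "Y = h y"
  have Y0: "Y \<noteq> 0"
    using xy(3) unfolding Y_def .
  have diff: "r - of_int (int q) = of_int (X - int q * Y) / of_int Y"
    unfolding r_eq X_def Y_def using xy(3) by (simp add: field_simps)
  have "int q ^ (multiplicity (int q) Y + 2) dvd X - int q * Y"
  proof (cases "X - int q * Y = 0")
    case False
    have "r \<noteq> of_int (int q)"
    proof
      assume "r = of_int (int q)"
      then have "of_int (X - int q * Y) / of_int Y = (0 :: rat)"
        using diff by simp
      then show False
        using False Y0 by (simp only: divide_eq_0_iff of_int_eq_0_iff) simp
    qed
    then have "2 \<le> int (multiplicity (int q) (X - int q * Y)) - int (multiplicity (int q) Y)"
      using r unfolding diff padic_val_rat_of_int_div[OF q False Y0] by simp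
    then show ?thesis
      by (intro multiplicity_dvd') simp
  qed simp
  then have "X \<noteq> 0 \<and> multiplicity (int q) X = Suc (multiplicity (int q) Y)"
    by (rule multiplicity_eq_Suc_if_dvd_diff[OF q Y0])
  then show False
    using gap[OF xy(1,2)] Y0 unfolding X_def Y_def by blast
qed

definition pair_product_dvd :: "nat \<Rightarrow> nat \<Rightarrow> nat \<Rightarrow> nat \<Rightarrow> bool" where
  "pair_product_dvd q1 q2 q3 n \<longleftrightarrow> q1 * q2 dvd n \<or> q1 * q3 dvd n \<or> q2 * q3 dvd n"

lemma pair_product_dvd_add:
  assumes "pair_product_dvd q1 q2 q3 a" and c: "q1 * q2 * q3 dvd c"
  shows "pair_product_dvd q1 q2 q3 (a + c)"
proof -
  have "q1 * q2 dvd q1 * q2 * q3" "q1 * q3 dvd q1 * q2 * q3" "q2 * q3 dvd q1 * q2 * q3"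
    by (simp_all add: ac_simps)
  then have "q1 * q2 dvd c" "q1 * q3 dvd c" "q2 * q3 dvd c"
    using c dvd_trans by blast+
  then show ?thesis
    using assms(1) unfolding pair_product_dvd_def by (meson dvd_add)
qed

lemma pair_product_dvdD:
  "pair_product_dvd q1 q2 q3 n \<Longrightarrow> q1 dvd n \<and> q2 dvd n \<or> q1 dvd n \<and> q3 dvd n \<or> q2 dvd n \<and> q3 dvd n"
  unfolding pair_product_dvd_def by (metis dvd_mult_left dvd_mult_right)

lemma pair_product_dvd_not_Suc:
  assumes "prime q1" "prime q2" "prime q3"
    and "pair_product_dvd q1 q2 q3 a" "pair_product_dvd q1 q2 q3 b"
  shows "a \<noteq> Suc b"
proof
  assume ab: "a = Suc b"
  have no_common: "False" if "prime c" "c dvd a" "c dvd b" for c :: nat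
    using that unfolding ab by (metis dvd_add_right_iff not_prime_1 nat_dvd_1_iff_1 plus_1_eq_Suc add.commute)
  show False
    using pair_product_dvdD[OF assms(4)] pair_product_dvdD[OF assms(5)] no_common assms(1-3) by blast
qed

lemma not_padic_dense_if_pair_product_dvd:
  fixes q q1 q2 q3 :: nat and h :: "'a \<Rightarrow> int"
  assumes "prime q" "prime q1" "prime q2" "prime q3"
    and "\<And>x. x \<in> D \<Longrightarrow> h x \<noteq> 0 \<Longrightarrow> pair_product_dvd q1 q2 q3 (multiplicity (int q) (h x))"
  shows "\<not> padic_dense q (ratio_set h D)"
proof (rule not_padic_dense_ratio_setI[OF assms(1)])
  fix x y
  assume "x \<in> D" "y \<in> D" "h x \<noteq> 0" "h y \<noteq> 0"
  then have "pair_product_dvd q1 q2 q3 (multiplicity (int q) (h x))"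
    and "pair_product_dvd q1 q2 q3 (multiplicity (int q) (h y))"
    using assms(5) by simp_all
  then show "multiplicity (int q) (h x) \<noteq> Suc (multiplicity (int q) (h y))"
    by (rule pair_product_dvd_not_Suc[OF assms(2-4)])
qed

lemma finite_padic_dense_primes:
  assumes "\<And>q. prime q \<Longrightarrow> B < q \<Longrightarrow> \<not> padic_dense q S"
  shows "finite {q. prime q \<and> padic_dense q S}"
proof (rule finite_subset)
  show "{q. prime q \<and> padic_dense q S} \<subseteq> {..B}"
    using assms leI by blast
qed simp

section \<open>Products of binary linear forms\<close>

definition form_prod :: "(int \<times> int) set \<Rightarrow> int \<Rightarrow> int \<Rightarrow> int" where
  "form_prod F y1 y2 = (\<Prod>(a, b)\<in>F. a * y1 + b * y2)"

lemma form_prod_scale: "form_prod F (c * y1) (c * y2) = c ^ card F * form_prod F y1 y2"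
proof -
  have "form_prod F (c * y1) (c * y2) = (\<Prod>ab\<in>F. c * (fst ab * y1 + snd ab * y2))"
    unfolding form_prod_def case_prod_unfold by (intro prod.cong) (simp_all add: algebra_simps)
  then show ?thesis
    unfolding form_prod_def case_prod_unfold by (simp add: prod.distrib)
qed

lemma form_prod_insert:
  "finite F \<Longrightarrow> (a, b) \<notin> F \<Longrightarrow> form_prod (insert (a, b) F) y1 y2 = (a * y1 + b * y2) * form_prod F y1 y2"
  unfolding form_prod_def by simp

lemma form_prod_union:
  "finite F \<Longrightarrow> finite G \<Longrightarrow> F \<inter> G = {} \<Longrightarrow> form_prod (F \<union> G) y1 y2 = form_prod F y1 y2 * form_prod G y1 y2"
  unfolding form_prod_def by (rule prod.union_disjoint)

lemma form_prod_image_left: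
  assumes "1 < p"
  shows "form_prod ((\<lambda>j. (1, int p ^ j)) ` I) x1 x2 = (\<Prod>j\<in>I. x1 + int p ^ j * x2)"
proof -
  have "inj_on (\<lambda>j. (1 :: int, int p ^ j)) I"
    using assms by (auto intro: inj_onI)
  then show ?thesis
    unfolding form_prod_def by (simp add: prod.reindex)
qed

lemma form_prod_image_right:
  assumes "1 < p"
  shows "form_prod ((\<lambda>i. (int p ^ i, 1)) ` I) x1 x2 = (\<Prod>i\<in>I. int p ^ i * x1 + x2)"
proof -
  have "inj_on (\<lambda>i. (int p ^ i, 1 :: int)) I"
    using assms by (auto intro: inj_onI)
  then show ?thesis
    unfolding form_prod_def by (simp add: prod.reindex)
qed

lemma prime_dvd_form_prod_iff:
  assumes "finite F" "prime q"
  shows "q dvd form_prod F y1 y2 \<longleftrightarrow> (\<exists>(a, b)\<in>F. q dvd a * y1 + b * y2)"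
  unfolding form_prod_def case_prod_unfold using assms by (simp add: prime_dvd_prod_iff)

lemma prime_dvd_both_if_dvd_two_forms:
  fixes q a b c d y1 y2 :: int
  assumes q: "prime q" and det: "\<not> q dvd a * d - b * c"
    and "q dvd a * y1 + b * y2" "q dvd c * y1 + d * y2"
  shows "q dvd y1 \<and> q dvd y2"
proof -
  have "(a * d - b * c) * y1 = d * (a * y1 + b * y2) - b * (c * y1 + d * y2)"
    and "(a * d - b * c) * y2 = a * (c * y1 + d * y2) - c * (a * y1 + b * y2)"
    by (simp_all add: algebra_simps)
  then have "q dvd (a * d - b * c) * y1" "q dvd (a * d - b * c) * y2"
    using assms(3,4) by (metis dvd_diff dvd_mult)+
  then show ?thesis
    using q det by (simp add: prime_dvd_mult_iff)
qed

definition form_coeffs :: "nat \<Rightarrow> nat \<Rightarrow> nat \<Rightarrow> (int \<times> int) set" where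
  "form_coeffs p m n =
     insert (1, 0) ((\<lambda>j. (1, int p ^ j)) ` {1..m} \<union> (\<lambda>i. (int p ^ i, 1)) ` {1..n})"

lemma finite_form_coeffs [simp]: "finite (form_coeffs p m n)"
  unfolding form_coeffs_def by simp

lemma not_dvd_prime_power_diff:
  fixes p q a b B :: nat
  assumes p: "prime p" and ab: "a \<noteq> b" "a \<le> B" "b \<le> B" and q: "p ^ B < q"
  shows "\<not> int q dvd int p ^ a - int p ^ b"
proof -
  have "int p ^ a \<le> int p ^ B" "int p ^ b \<le> int p ^ B" "int p ^ B < int q"
    using ab prime_gt_0_nat[OF p] q by (simp_all add: power_increasing flip: of_nat_power)
  moreover have "0 < int p ^ a" "0 < int p ^ b" "int p ^ a \<noteq> int p ^ b"
    using ab(1) prime_gt_1_nat[OF p] by simp_all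
  ultimately have "0 < \<bar>int p ^ a - int p ^ b\<bar>" "\<bar>int p ^ a - int p ^ b\<bar> < int q"
    by linarith+
  then show ?thesis
    by (metis dvd_abs_iff zdvd_not_zless)
qed

lemma not_dvd_prime_power:
  fixes p q a B :: nat
  assumes p: "prime p" and a: "a \<le> B" and q: "p ^ B < q"
  shows "\<not> int q dvd int p ^ a"
proof -
  have "p ^ a \<le> p ^ B"
    using a prime_gt_0_nat[OF p] by (simp add: power_increasing)
  then have "0 < int p ^ a" "int p ^ a < int q"
    using q prime_gt_0_nat[OF p] by (simp_all flip: of_nat_power)
  then show ?thesis
    by (rule zdvd_not_zless)
qed

lemma form_coeffs_det_not_dvd:
  fixes p q m n :: nat
  assumes p: "prime p" and q: "prime q" "p ^ (m + n) < q"
    and ab: "(a, b) \<in> form_coeffs p m n" and cd: "(c, d) \<in> form_coeffs p m n" and ne: "(a, b) \<noteq> (c, d)"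
  shows "\<not> int q dvd a * d - b * c"
proof -
  txt \<open>The determinants are, up to sign, 1, p^i, p^i - p^j and p^(i + j) - 1 with exponents
    at most m + n: nonzero and smaller than q in absolute value.\<close>
  have diff: "\<not> int q dvd int p ^ i - int p ^ j" if "i \<noteq> j" "i \<le> m + n" "j \<le> m + n" for i j
    using not_dvd_prime_power_diff[OF p that q(2)] .
  have diff1: "\<not> int q dvd int p ^ i - 1" "\<not> int q dvd 1 - int p ^ i" if "0 < i" "i \<le> m + n" for i
    using diff[of i 0] diff[of 0 i] that by simp_all
  have pow: "\<not> int q dvd int p ^ i" if "i \<le> m + n" for i
    using not_dvd_prime_power[OF p that q(2)] .
  have "1 < int p" "\<not> int q dvd 1"
    using prime_gt_1_nat[OF p] prime_gt_1_nat[OF q(1)] by simp_all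
  with ab cd ne show ?thesis
    unfolding form_coeffs_def by (auto simp: diff diff1 pow simp flip: power_add)
qed

lemma form_coeffs_unique_dvd:
  fixes p q m n :: nat and y1 y2 :: int
  assumes p: "prime p" and q: "prime q" "p ^ (m + n) < q"
    and y: "\<not> (int q dvd y1 \<and> int q dvd y2)"
    and ab: "(a, b) \<in> form_coeffs p m n" "int q dvd a * y1 + b * y2"
    and cd: "(c, d) \<in> form_coeffs p m n" "int q dvd c * y1 + d * y2"
  shows "(a, b) = (c, d)"
proof (rule ccontr)
  assume "(a, b) \<noteq> (c, d)"
  then have "\<not> int q dvd a * d - b * c"
    using form_coeffs_det_not_dvd[OF p q ab(1) cd(1)] by blast
  then show False
    using prime_dvd_both_if_dvd_two_forms[OF _ _ ab(2) cd(2)] q(1) y by simp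
qed

lemma exists_primitive_scaling:
  fixes q :: nat and x1 x2 :: int
  assumes q: "prime q" and x: "x1 \<noteq> 0 \<or> x2 \<noteq> 0"
  obtains \<mu> y1 y2 where "x1 = int q ^ \<mu> * y1" "x2 = int q ^ \<mu> * y2" "\<not> (int q dvd y1 \<and> int q dvd y2)"
proof -
  define \<mu> where "\<mu> = multiplicity (int q) (gcd x1 x2)"
  have "int q ^ \<mu> dvd x1" "int q ^ \<mu> dvd x2"
    unfolding \<mu>_def by (meson dvd_trans gcd_dvd1 gcd_dvd2 multiplicity_dvd)+
  then obtain y1 y2 where y: "x1 = int q ^ \<mu> * y1" "x2 = int q ^ \<mu> * y2"
    by (auto elim!: dvdE)
  have "\<not> (int q dvd y1 \<and> int q dvd y2)"
  proof
    assume "int q dvd y1 \<and> int q dvd y2"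
    then have "int q ^ Suc \<mu> dvd gcd x1 x2"
      unfolding y by (simp add: mult_dvd_mono)
    moreover have "gcd x1 x2 \<noteq> 0" "\<not> is_unit (int q)"
      using x prime_gt_1_nat[OF q] by auto
    ultimately show False
      using multiplicity_geI[of "gcd x1 x2" "int q" "Suc \<mu>"] unfolding \<mu>_def by simp
  qed
  with y show ?thesis
    by (rule that)
qed

lemma pair_product_dvd_multiplicity:
  fixes q q1 q2 q3 :: nat and u v w :: int
  assumes q: "prime q" and nz: "u ^ (q1 * q2) * v ^ (q1 * q3) * w ^ (q2 * q3) \<noteq> 0"
    and uv: "\<not> (int q dvd u \<and> int q dvd v)" and uw: "\<not> (int q dvd u \<and> int q dvd w)"
    and vw: "\<not> (int q dvd v \<and> int q dvd w)"
  shows "pair_product_dvd q1 q2 q3 (multiplicity (int q) (u ^ (q1 * q2) * v ^ (q1 * q3) * w ^ (q2 * q3)))"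
proof -
  have pq: "prime_elem (int q)"
    using q by simp
  have mpow: "multiplicity (int q) (x ^ k) = k * multiplicity (int q) x" if "x ^ k \<noteq> 0" for x :: int and k
    using that by (cases "k = 0") (simp_all add: prime_elem_multiplicity_power_distrib[OF pq])
  have "multiplicity (int q) (u ^ (q1 * q2) * v ^ (q1 * q3) * w ^ (q2 * q3)) =
      q1 * q2 * multiplicity (int q) u + q1 * q3 * multiplicity (int q) v + q2 * q3 * multiplicity (int q) w"
    using nz by (simp add: prime_elem_multiplicity_mult_distrib[OF pq] mpow)
  moreover have "multiplicity (int q) x = 0" if "\<not> int q dvd x" for x
    using that by (rule not_dvd_imp_multiplicity_0)
  ultimately show ?thesis
    using uv uw vw unfolding pair_product_dvd_def by (auto simp: mult.assoc)
qed

lemma pair_product_dvd_multiplicity_form_prods: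
  fixes p q q1 q2 q3 m n :: nat and y1 y2 :: int
  assumes p: "prime p" and q: "prime q" "p ^ (m + n) < q"
    and sub: "A \<subseteq> form_coeffs p m n" "B \<subseteq> form_coeffs p m n" "C \<subseteq> form_coeffs p m n"
    and disj: "A \<inter> B = {}" "A \<inter> C = {}" "B \<inter> C = {}"
    and y: "\<not> (int q dvd y1 \<and> int q dvd y2)"
    and nz: "form_prod A y1 y2 ^ (q1 * q2) * form_prod B y1 y2 ^ (q1 * q3) * form_prod C y1 y2 ^ (q2 * q3) \<noteq> 0"
  shows "pair_product_dvd q1 q2 q3 (multiplicity (int q)
    (form_prod A y1 y2 ^ (q1 * q2) * form_prod B y1 y2 ^ (q1 * q3) * form_prod C y1 y2 ^ (q2 * q3)))"
proof -
  have sep: "\<not> (int q dvd form_prod F y1 y2 \<and> int q dvd form_prod G y1 y2)"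
    if "F \<subseteq> form_coeffs p m n" "G \<subseteq> form_coeffs p m n" "F \<inter> G = {}" for F G
  proof
    assume dvd: "int q dvd form_prod F y1 y2 \<and> int q dvd form_prod G y1 y2"
    have "finite F" "finite G" "prime (int q)"
      using that(1,2) q(1) by (auto intro: finite_subset[OF _ finite_form_coeffs])
    then have "\<exists>(a, b)\<in>F. int q dvd a * y1 + b * y2" "\<exists>(c, d)\<in>G. int q dvd c * y1 + d * y2"
      using dvd by (simp_all add: prime_dvd_form_prod_iff)
    then obtain a b c d where "(a, b) \<in> F" "int q dvd a * y1 + b * y2" "(c, d) \<in> G" "int q dvd c * y1 + d * y2"
      by blast
    then show False
      using form_coeffs_unique_dvd[OF p q y] that by blast
  qed
  show ?thesis
    using pair_product_dvd_multiplicity[OF q(1) nz] sep sub disj by blast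
qed

section \<open>Non-density for large primes\<close>

lemma poly_f_form_prod_decomposition:
  fixes p q1 q2 q3 :: nat
  assumes p: "1 < p"
  obtains A B C where "A \<subseteq> form_coeffs p (q1 + 1) 0" "B \<subseteq> form_coeffs p (q1 + 1) 0"
    "C \<subseteq> form_coeffs p (q1 + 1) 0" "A \<inter> B = {}" "A \<inter> C = {}" "B \<inter> C = {}"
    "\<And>x. poly_f p q1 q2 q3 x =
       form_prod A x 1 ^ (q1 * q2) * form_prod B x 1 ^ (q1 * q3) * form_prod C x 1 ^ (q2 * q3)"
proof
  let ?B = "(\<lambda>j. (1, int p ^ j)) ` {1..q1}"
  show "{(1, 0)} \<subseteq> form_coeffs p (q1 + 1) 0" "?B \<subseteq> form_coeffs p (q1 + 1) 0"
    "{(1, int p ^ (q1 + 1))} \<subseteq> form_coeffs p (q1 + 1) 0"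
    unfolding form_coeffs_def by (auto simp del: power_Suc)
  show "{(1, 0)} \<inter> ?B = {}" "{(1, 0)} \<inter> {(1, int p ^ (q1 + 1))} = {}"
    "?B \<inter> {(1, int p ^ (q1 + 1))} = {}"
    using p by (auto simp del: power_Suc)
  show "poly_f p q1 q2 q3 x = form_prod {(1, 0)} x 1 ^ (q1 * q2) * form_prod ?B x 1 ^ (q1 * q3)
      * form_prod {(1, int p ^ (q1 + 1))} x 1 ^ (q2 * q3)" for x
    unfolding poly_f_eq form_prod_image_left[OF p] by (simp add: form_prod_def)
qed

lemma poly_g2_form_prod_decomposition:
  fixes p q1 q2 q3 :: nat
  assumes p: "1 < p" and q: "0 < q1" "q1 < q2" "q2 < q3"
  obtains A B C where "A \<subseteq> form_coeffs p (q1 + 1) (q3 + q2 - 2)" "B \<subseteq> form_coeffs p (q1 + 1) (q3 + q2 - 2)"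
    "C \<subseteq> form_coeffs p (q1 + 1) (q3 + q2 - 2)" "A \<inter> B = {}" "A \<inter> C = {}" "B \<inter> C = {}"
    "card A = q3" "card B = q2" "card C = q1"
    "\<And>x1 x2. poly_g2 p q1 q2 q3 (x1, x2) =
       form_prod A x1 x2 ^ (q1 * q2) * form_prod B x1 x2 ^ (q1 * q3) * form_prod C x1 x2 ^ (q2 * q3)"
proof
  define L where "L = (\<lambda>j. (1 :: int, int p ^ j))"
  define R where "R = (\<lambda>i. (int p ^ i, 1 :: int))"
  define IA where "IA = {1..q3 - 1}"
  define IB where "IB = {q3..q3 + q2 - q1 - 1}"
  define IC where "IC = {q3 + q2 - q1..q3 + q2 - 2}"
  have pow_eq: "int p ^ i = int p ^ j \<longleftrightarrow> i = j" and pow_eq_1: "int p ^ i = 1 \<longleftrightarrow> i = 0" for i j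
    using p power_inject_exp[of "int p" i 0] by simp_all
  let ?A = "insert (1, 0) (R ` IA)"
  let ?B = "L ` {1..q1} \<union> R ` IB"
  let ?C = "insert (L (q1 + 1)) (R ` IC)"
  show "?A \<subseteq> form_coeffs p (q1 + 1) (q3 + q2 - 2)" "?B \<subseteq> form_coeffs p (q1 + 1) (q3 + q2 - 2)"
    "?C \<subseteq> form_coeffs p (q1 + 1) (q3 + q2 - 2)"
    unfolding form_coeffs_def L_def R_def IA_def IB_def IC_def using q by (auto simp del: power_Suc)
  show "?A \<inter> ?B = {}" "?A \<inter> ?C = {}" "?B \<inter> ?C = {}"
    unfolding IA_def IB_def IC_def L_def R_def using p q by (auto simp: pow_eq pow_eq_1 simp del: power_Suc)
  have inj: "inj L" "inj R"
    unfolding L_def R_def by (auto intro: injI simp: pow_eq)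
  have notin: "(1, 0) \<notin> R ` IA" "L (q1 + 1) \<notin> R ` IC" "L ` {1..q1} \<inter> R ` IB = {}"
    unfolding L_def R_def IA_def IB_def IC_def using q by (auto simp: pow_eq_1 simp del: power_Suc)
  show "card ?A = q3" "card ?B = q2" "card ?C = q1"
    using notin q by (simp_all add: card_Un_disjoint card_image inj_on_subset[OF inj(1)]
        inj_on_subset[OF inj(2)] IA_def IB_def IC_def)
  show "poly_g2 p q1 q2 q3 (x1, x2) =
      form_prod ?A x1 x2 ^ (q1 * q2) * form_prod ?B x1 x2 ^ (q1 * q3) * form_prod ?C x1 x2 ^ (q2 * q3)" for x1 x2
  proof -
    have "form_prod ?A x1 x2 = x1 * (\<Prod>i\<in>IA. int p ^ i * x1 + x2)"
      using notin(1) unfolding R_def by (simp add: form_prod_insert form_prod_image_right[OF p] IA_def)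
    moreover have "form_prod ?B x1 x2 = (\<Prod>i=1..q1. x1 + int p ^ i * x2) * (\<Prod>i\<in>IB. int p ^ i * x1 + x2)"
      using notin(3) unfolding L_def R_def
      by (simp add: form_prod_union form_prod_image_left[OF p] form_prod_image_right[OF p] IB_def)
    moreover have "form_prod ?C x1 x2 = (x1 + int p ^ (q1 + 1) * x2) * (\<Prod>i\<in>IC. int p ^ i * x1 + x2)"
      using notin(2) unfolding L_def R_def
      by (simp add: form_prod_insert form_prod_image_right[OF p] IC_def del: power_Suc)
    ultimately show ?thesis
      unfolding poly_g2_def IA_def IB_def IC_def by (simp add: power_mult_distrib prod_power_distrib mult_ac)
  qed
qed

lemma pair_product_dvd_multiplicity_poly_f:
  fixes p q q1 q2 q3 :: nat
  assumes p: "prime p" and q: "prime q" "p ^ (q1 + 1) < q" and nz: "poly_f p q1 q2 q3 x \<noteq> 0"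
  shows "pair_product_dvd q1 q2 q3 (multiplicity (int q) (poly_f p q1 q2 q3 x))"
proof -
  obtain A B C where ABC: "A \<subseteq> form_coeffs p (q1 + 1) 0" "B \<subseteq> form_coeffs p (q1 + 1) 0"
    "C \<subseteq> form_coeffs p (q1 + 1) 0" "A \<inter> B = {}" "A \<inter> C = {}" "B \<inter> C = {}"
    and f: "poly_f p q1 q2 q3 x =
       form_prod A x 1 ^ (q1 * q2) * form_prod B x 1 ^ (q1 * q3) * form_prod C x 1 ^ (q2 * q3)"
    using poly_f_form_prod_decomposition[OF prime_gt_1_nat[OF p]] by metis
  have prim: "\<not> (int q dvd x \<and> int q dvd 1)"
    using prime_gt_1_nat[OF q(1)] by simp
  have "p ^ (q1 + 1 + 0) < q"
    using q(2) by simp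
  from pair_product_dvd_multiplicity_form_prods[OF p q(1) this ABC prim nz[unfolded f]]
  show ?thesis
    unfolding f .
qed

lemma poly_g2_homogeneous:
  fixes p q1 q2 q3 :: nat and c y1 y2 :: int
  assumes p: "1 < p" and qs: "0 < q1" "q1 < q2" "q2 < q3"
  shows "poly_g2 p q1 q2 q3 (c * y1, c * y2) = c ^ (3 * (q1 * q2 * q3)) * poly_g2 p q1 q2 q3 (y1, y2)"
proof -
  obtain A B C where card: "card A = q3" "card B = q2" "card C = q1"
    and g2: "\<And>x1 x2. poly_g2 p q1 q2 q3 (x1, x2) =
       form_prod A x1 x2 ^ (q1 * q2) * form_prod B x1 x2 ^ (q1 * q3) * form_prod C x1 x2 ^ (q2 * q3)"
    using poly_g2_form_prod_decomposition[OF p qs] by metis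
  have "q3 * (q1 * q2) + q2 * (q1 * q3) + q1 * (q2 * q3) = 3 * (q1 * q2 * q3)"
    by (simp add: algebra_simps)
  then have exp: "(c ^ q3) ^ (q1 * q2) * (c ^ q2) ^ (q1 * q3) * (c ^ q1) ^ (q2 * q3) = c ^ (3 * (q1 * q2 * q3))"
    by (metis power_add power_mult)
  show ?thesis
    unfolding g2 form_prod_scale card power_mult_distrib exp[symmetric] by (simp only: ac_simps)
qed

lemma pair_product_dvd_multiplicity_poly_g2:
  fixes p q q1 q2 q3 :: nat
  assumes p: "prime p" and q: "prime q" "p ^ (q3 + q2 + q1 - 1) < q"
    and qs: "0 < q1" "q1 < q2" "q2 < q3" and nz: "poly_g2 p q1 q2 q3 x \<noteq> 0"
  shows "pair_product_dvd q1 q2 q3 (multiplicity (int q) (poly_g2 p q1 q2 q3 x))"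
proof -
  obtain x1 x2 where x: "x = (x1, x2)"
    by fastforce
  have "0 < 3 * (q1 * q2 * q3)"
    using qs by simp
  then have "x1 \<noteq> 0 \<or> x2 \<noteq> 0"
    using nz poly_g2_homogeneous[OF prime_gt_1_nat[OF p] qs, of 0 0 0] unfolding x by (auto simp: power_0_left)
  then obtain \<mu> y1 y2 where y: "x1 = int q ^ \<mu> * y1" "x2 = int q ^ \<mu> * y2"
    and prim: "\<not> (int q dvd y1 \<and> int q dvd y2)"
    using exists_primitive_scaling[OF q(1)] by metis
  have gx: "poly_g2 p q1 q2 q3 x = int q ^ (\<mu> * (3 * (q1 * q2 * q3))) * poly_g2 p q1 q2 q3 (y1, y2)"
    unfolding x y poly_g2_homogeneous[OF prime_gt_1_nat[OF p] qs] by (simp add: power_mult)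
  then have gy: "poly_g2 p q1 q2 q3 (y1, y2) \<noteq> 0"
    using nz by simp
  obtain A B C where ABC: "A \<subseteq> form_coeffs p (q1 + 1) (q3 + q2 - 2)" "B \<subseteq> form_coeffs p (q1 + 1) (q3 + q2 - 2)"
    "C \<subseteq> form_coeffs p (q1 + 1) (q3 + q2 - 2)" "A \<inter> B = {}" "A \<inter> C = {}" "B \<inter> C = {}"
    and g2: "poly_g2 p q1 q2 q3 (y1, y2) =
       form_prod A y1 y2 ^ (q1 * q2) * form_prod B y1 y2 ^ (q1 * q3) * form_prod C y1 y2 ^ (q2 * q3)"
    using poly_g2_form_prod_decomposition[OF prime_gt_1_nat[OF p] qs] by metis
  have "(q1 + 1) + (q3 + q2 - 2) = q3 + q2 + q1 - 1"
    using qs by simp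
  then have "p ^ ((q1 + 1) + (q3 + q2 - 2)) < q"
    using q(2) by (simp only:)
  from pair_product_dvd_multiplicity_form_prods[OF p q(1) this ABC prim gy[unfolded g2]]
  have "pair_product_dvd q1 q2 q3 (multiplicity (int q) (poly_g2 p q1 q2 q3 (y1, y2)))"
    unfolding g2 .
  moreover have "multiplicity (int q) (poly_g2 p q1 q2 q3 x) =
      multiplicity (int q) (poly_g2 p q1 q2 q3 (y1, y2)) + q1 * q2 * q3 * (3 * \<mu>)"
    unfolding gx using q(1) gy by (simp add: prime_elem_multiplicity_mult_distrib ac_simps)
  ultimately show ?thesis
    by (simp add: pair_product_dvd_add)
qed

lemma pair_product_dvd_multiplicity_poly_gn:
  fixes p q q1 q2 q3 n :: nat
  assumes p: "prime p" and q: "prime q" "p ^ (q3 + q2 + q1 - 1) < q"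
    and qs: "0 < q1" "q1 < q2" "q2 < q3" and nz: "poly_gn p q1 q2 q3 n x \<noteq> 0"
  shows "pair_product_dvd q1 q2 q3 (multiplicity (int q) (poly_gn p q1 q2 q3 n x))"
proof -
  define P where "P = (\<Prod>i\<in>{2..<n}. x i)"
  have g2: "poly_g2 p q1 q2 q3 (x 0, x 1) \<noteq> 0" and P: "P \<noteq> 0"
    using nz qs unfolding poly_gn_def P_def by auto
  have "prime_elem (int q)"
    using q(1) by simp
  with g2 P have "multiplicity (int q) (poly_gn p q1 q2 q3 n x) =
      multiplicity (int q) (poly_g2 p q1 q2 q3 (x 0, x 1)) + q1 * q2 * q3 * multiplicity (int q) P"
    unfolding poly_gn_def P_def[symmetric]
    by (simp add: prime_elem_multiplicity_mult_distrib prime_elem_multiplicity_power_distrib)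
  then show ?thesis
    using pair_product_dvd_add[OF pair_product_dvd_multiplicity_poly_g2[OF p q qs g2]] by simp
qed

theorem theorem4p8:
  fixes p q1 q2 q3 :: nat
  assumes "prime p" "prime q1" "prime q2" "prime q3"
    and "q1 < q2" "q2 < q3"
    and "coprime (q1*q2*q3) (p*(p-1))"
  shows
    "(padic_dense p (ratio_set (poly_f p q1 q2 q3) UNIV)
      \<and> finite {q. prime q \<and> padic_dense q (ratio_set (poly_f p q1 q2 q3) UNIV)}
      \<and> (\<forall>q. prime q \<and> q > p ^ (q1+1) \<longrightarrow>
            \<not> padic_dense q (ratio_set (poly_f p q1 q2 q3) UNIV)))
   \<and> (padic_dense p (ratio_set (poly_g2 p q1 q2 q3) UNIV)
      \<and> finite {q. prime q \<and> padic_dense q (ratio_set (poly_g2 p q1 q2 q3) UNIV)}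
      \<and> (\<forall>q. prime q \<and> q > p ^ (q3+q2+q1-1) \<longrightarrow>
            \<not> padic_dense q (ratio_set (poly_g2 p q1 q2 q3) UNIV)))
   \<and> (\<forall>n>2.
        padic_dense p (ratio_set (poly_gn p q1 q2 q3 n) (int_points n))
      \<and> finite {q. prime q \<and> padic_dense q (ratio_set (poly_gn p q1 q2 q3 n) (int_points n))}
      \<and> (\<forall>q. prime q \<and> q > p ^ (q3+q2+q1-1) \<longrightarrow>
            \<not> padic_dense q (ratio_set (poly_gn p q1 q2 q3 n) (int_points n))))"
proof -
  note p = assms(1) and qs = assms(2-4)
  have q_pos: "0 < q1" "q1 < q2" "q2 < q3"
    using assms(2,5,6) by (simp_all add: prime_gt_0_nat)
  have "\<not> padic_dense q (ratio_set (poly_f p q1 q2 q3) UNIV)" if "prime q" "p ^ (q1 + 1) < q" for q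
    by (rule not_padic_dense_if_pair_product_dvd[OF that(1) qs])
      (rule pair_product_dvd_multiplicity_poly_f[OF p that])
  moreover have "\<not> padic_dense q (ratio_set (poly_g2 p q1 q2 q3) UNIV)"
    if "prime q" "p ^ (q3 + q2 + q1 - 1) < q" for q
    by (rule not_padic_dense_if_pair_product_dvd[OF that(1) qs])
      (rule pair_product_dvd_multiplicity_poly_g2[OF p that q_pos])
  moreover have "\<not> padic_dense q (ratio_set (poly_gn p q1 q2 q3 n) (int_points n))"
    if "prime q" "p ^ (q3 + q2 + q1 - 1) < q" for q n
    by (rule not_padic_dense_if_pair_product_dvd[OF that(1) qs])
      (rule pair_product_dvd_multiplicity_poly_gn[OF p that q_pos])
  ultimately show ?thesis
    using padic_dense_ratio_set_poly_f[OF assms] padic_dense_ratio_set_poly_g2[OF assms]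
      padic_dense_ratio_set_poly_gn[OF assms] finite_padic_dense_primes by blast
qed

end
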